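(* Assume $\beta<1-1/\gamma$ and let $\alpha=\gamma-\frac1{1-\beta}>0$. There exists $\delta>0$ such that $$\lim_{N\to\infty}\mathbb P\Big(\#\{k\in K^N:\ w_k\ge N^{-(\alpha+\delta)}\}=0\Big)=1.$$
   Context: Fix $\gamma>1$, $\beta\in(0,1)$. $\Xi$ is a Poisson point process on $(0,\infty)$ with intensity $x^{-2}dx$ and atoms $w_1>w_2>\cdots$. Conditionally on $\Xi$, $J^N=(J^N_1,\dots,J^N_N)$ are $N$ i.i.d. indices in $\{1,\dots,\lceil N^\gamma\rceil\}$ with $\mathbb P(J^N_k=i\mid\Xi)=w_i^\beta/\sum_{j=1}^{\lceil N^\gamma\rceil}w_j^\beta$. Let $\#J^N$ be the number of distinct values among $J^N_1,\dots,J^N_N$ and $r^N=N-\#J^N$. Given $\Xi$ and $J^N$, $K^N$ is a set of $r^N$ indices sampled without replacement from $\{1,\dots,\lceil N^\gamma\rceil\}\setminus\{J^N_1,\dots,J^N_N\}$ with weights $w_i^\beta$ (each successive draw picks a not-yet-drawn eligible index $i$ with probability proportional to $w_i^\beta$ among the not-yet-drawn eligible ones). *)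

theory Defs
  imports "HOL-Probability.Probability"
begin

definition ppp_intensity :: "real measure" where
  "ppp_intensity = density lborel (\<lambda>x. if 0 < x then ennreal (1 / x ^ 2) else 0)"

definition atom_count :: "(nat \<Rightarrow> real) \<Rightarrow> real set \<Rightarrow> nat" where
  "atom_count v A = card {i. v i \<in> A}"

text \<open>w is the decreasingly ordered sequence of atoms w 0 > w 1 > ... (paper: w_1 > w_2 > ...)
  of a Poisson point process on (0,infinity) with intensity x^(-2) dx, defined on the
  probability space M: almost surely the atoms are positive and strictly decreasing;
  the counts of atoms in Borel sets of finite intensity are a.s. finite and Poisson
  distributed with parameter the intensity of the set; counts in finitely many pairwise
  disjoint such sets are independent.\<close>
definition poisson_atoms :: "'a measure \<Rightarrow> ('a \<Rightarrow> nat \<Rightarrow> real) \<Rightarrow> bool" where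
  "poisson_atoms M w \<longleftrightarrow>
     prob_space M \<and>
     (\<forall>i. (\<lambda>\<omega>. w \<omega> i) \<in> borel_measurable M) \<and>
     (AE \<omega> in M. (\<forall>i. 0 < w \<omega> i) \<and> (\<forall>i. w \<omega> (Suc i) < w \<omega> i)) \<and>
     (\<forall>A \<in> sets borel. emeasure ppp_intensity A < \<infinity> \<longrightarrow>
        (AE \<omega> in M. finite {i. w \<omega> i \<in> A}) \<and>
        (\<forall>k. measure M {\<omega> \<in> space M. atom_count (w \<omega>) A = k} =
              (measure ppp_intensity A) ^ k / fact k * exp (- measure ppp_intensity A))) \<and>
     (\<forall>n (B :: nat \<Rightarrow> real set).
        (\<forall>j<n. B j \<in> sets borel \<and> emeasure ppp_intensity (B j) < \<infinity>) \<longrightarrow>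
        disjoint_family_on B {..<n} \<longrightarrow>
        prob_space.indep_vars M (\<lambda>_. count_space UNIV)
          (\<lambda>j \<omega>. atom_count (w \<omega>) (B j)) {..<n})"

definition weighted_pmf :: "nat set \<Rightarrow> (nat \<Rightarrow> real) \<Rightarrow> nat pmf" where
  "weighted_pmf S v = embed_pmf (\<lambda>i. if i \<in> S then v i / (\<Sum>j\<in>S. v j) else 0)"

fun iid_list :: "'b pmf \<Rightarrow> nat \<Rightarrow> 'b list pmf" where
  "iid_list p 0 = return_pmf []"
| "iid_list p (Suc n) = bind_pmf p (\<lambda>x. map_pmf (\<lambda>xs. x # xs) (iid_list p n))"

fun draw_wo :: "(nat \<Rightarrow> real) \<Rightarrow> nat set \<Rightarrow> nat \<Rightarrow> nat set pmf" where
  "draw_wo v S 0 = return_pmf {}"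
| "draw_wo v S (Suc r) =
     bind_pmf (weighted_pmf S v) (\<lambda>i. map_pmf (insert i) (draw_wo v (S - {i}) r))"

text \<open>Number of index slots ceil(N^gamma); indices are 0..<L (paper: 1..L).\<close>
definition num_slots :: "real \<Rightarrow> nat \<Rightarrow> nat" where
  "num_slots \<gamma> N = nat \<lceil>real N powr \<gamma>\<rceil>"

text \<open>Conditional law, given the atoms w, of the set K^N.\<close>
definition K_pmf :: "real \<Rightarrow> real \<Rightarrow> (nat \<Rightarrow> real) \<Rightarrow> nat \<Rightarrow> nat set pmf" where
  "K_pmf \<gamma> \<beta> w N =
     (let L = num_slots \<gamma> N; v = (\<lambda>i. w i powr \<beta>) in
      bind_pmf (iid_list (weighted_pmf {..<L} v) N) (\<lambda>J.
        draw_wo v ({..<L} - set J) (N - card (set J))))"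

end

theory Submission
  imports Defs "HOL-Real_Asymp.Real_Asymp"
begin

text \<open>Given the atoms, \<open>K\<^sup>N\<close> redraws, without replacement and from the free slots, as many
  indices as there were repeats among the \<open>N\<close> i.i.d. draws \<open>J\<^sup>N\<close>. Typically no atom exceeds
  \<open>N\<^sup>\<delta>\<close>, while the atoms above \<open>N\<^bsup>-\<gamma>\<^esup>\<close> give the first \<open>N\<^sup>\<gamma>\<close> slots a total weight
  \<open>W \<ge> N\<^bsup>\<gamma>(1-\<beta>)\<^esup> / e\<^sup>2\<close>. Then the expected number of repeats is at most \<open>N\<^sup>2 N\<^sup>\<delta> / W\<close>,
  and each redraw hits an atom above \<open>N\<^bsup>-(\<alpha>+\<delta>)\<^esup>\<close> with probability at most twice
  their total weight divided by \<open>W\<close>. Sorting these atoms into layers by size and using the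
  typical number \<open>1/t\<close> of atoms above \<open>t\<close>, their total weight is \<open>O(N\<^bsup>14\<delta>\<^esup>)\<close>, so the
  hitting probability is \<open>O(N\<^bsup>-9\<delta>\<^esup>)\<close>. Poisson tail bounds show that the typical
  configurations have probability tending to \<open>1\<close>.\<close>

section \<open>Sampling with and without replacement\<close>

lemma pmf_weighted_pmf:
  assumes "finite S" "\<And>i. i \<in> S \<Longrightarrow> 0 \<le> v i" "0 < sum v S"
  shows "pmf (weighted_pmf S v) i = (if i \<in> S then v i / sum v S else 0)"
  unfolding weighted_pmf_def
proof (rule pmf_embed_pmf)
  show "\<And>x. 0 \<le> (if x \<in> S then v x / sum v S else 0)" using assms by auto
  have "(\<integral>\<^sup>+ x. ennreal (if x \<in> S then v x / sum v S else 0) \<partial>count_space UNIV)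
     = (\<Sum>x\<in>S. ennreal (v x / sum v S))"
    by (subst nn_integral_count_space') (use assms in auto)
  also have "\<dots> = ennreal (\<Sum>x\<in>S. v x / sum v S)"
    using assms by (subst sum_ennreal[symmetric]) auto
  also have "(\<Sum>x\<in>S. v x / sum v S) = 1"
    using assms by (simp add: sum_divide_distrib[symmetric])
  finally show "(\<integral>\<^sup>+ x. ennreal (if x \<in> S then v x / sum v S else 0) \<partial>count_space UNIV) = 1"
    by simp
qed

lemma set_pmf_weighted_pmf:
  assumes "finite S" "\<And>i. i \<in> S \<Longrightarrow> 0 \<le> v i" "0 < sum v S"
  shows "set_pmf (weighted_pmf S v) \<subseteq> S"
  using pmf_weighted_pmf[OF assms] by (auto simp: set_pmf_iff split: if_splits)

lemma prob_bind_pmf: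
  "measure_pmf.prob (bind_pmf p f) E = measure_pmf.expectation p (\<lambda>x. measure_pmf.prob (f x) E)"
proof -
  have "ennreal (measure_pmf.prob (bind_pmf p f) E) = (\<integral>\<^sup>+ x. emeasure (measure_pmf (f x)) E \<partial>p)"
    by (simp add: measure_pmf.emeasure_eq_measure[symmetric] emeasure_bind_pmf)
  also have "\<dots> = ennreal (measure_pmf.expectation p (\<lambda>x. measure_pmf.prob (f x) E))"
    by (simp add: measure_pmf.emeasure_eq_measure)
       (auto intro!: nn_integral_eq_integral measure_pmf.integrable_const_bound[where B=1])
  finally show ?thesis
    by (simp add: ennreal_inj)
qed

lemma set_pmf_iid_list: "xs \<in> set_pmf (iid_list p n) \<Longrightarrow> length xs = n \<and> set xs \<subseteq> set_pmf p"
  by (induction n arbitrary: xs) fastforce+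

lemma finite_set_pmf_iid_list:
  assumes "finite (set_pmf p)"
  shows "finite (set_pmf (iid_list p n))"
proof (rule finite_subset)
  show "set_pmf (iid_list p n) \<subseteq> {xs. set xs \<subseteq> set_pmf p \<and> length xs = n}"
    using set_pmf_iid_list by blast
  show "finite {xs. set xs \<subseteq> set_pmf p \<and> length xs = n}"
    using finite_lists_length_eq[OF assms] by simp
qed

lemma finite_set_pmf_draw_wo: "K \<in> set_pmf (draw_wo v S r) \<Longrightarrow> finite K"
  by (induction r arbitrary: S K) auto

lemma finite_set_pmf_K_pmf: "K \<in> set_pmf (K_pmf \<gamma> \<beta> w N) \<Longrightarrow> finite K"
  unfolding K_pmf_def Let_def by (auto dest: finite_set_pmf_draw_wo)

lemma expectation_pmf_finite_support:
  assumes "finite A" "set_pmf p \<subseteq> A"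
  shows "measure_pmf.expectation p f = (\<Sum>x\<in>A. pmf p x * f x)"
  using assms by (subst integral_measure_pmf[where A=A]) (auto simp: mult.commute)

text \<open>While the remaining weight stays at least \<open>Wl\<close>, each draw lands in \<open>A\<close> with
  probability at most \<open>sum v (A \<inter> S0) / Wl\<close>; a union bound over the \<open>r\<close> draws finishes.\<close>
lemma prob_draw_wo_hits_le:
  assumes S0: "finite S0" and v: "\<And>i. i \<in> S0 \<Longrightarrow> 0 \<le> v i \<and> v i \<le> V"
    and Wl: "0 < Wl" and V: "0 \<le> V"
  shows "S \<subseteq> S0 \<Longrightarrow> Wl + real r * V \<le> sum v S \<Longrightarrow>
    measure_pmf.prob (draw_wo v S r) {K. K \<inter> A \<noteq> {}} \<le> real r * sum v (A \<inter> S0) / Wl"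
proof (induction r arbitrary: S)
  case 0
  then show ?case by simp
next
  case (Suc r)
  let ?hit = "{K. K \<inter> A \<noteq> {}}"
  let ?WA = "sum v (A \<inter> S0)"
  let ?W = "sum v S"
  have finS: "finite S" using Suc.prems S0 finite_subset by blast
  have vS: "\<And>i. i \<in> S \<Longrightarrow> 0 \<le> v i" using Suc.prems v by blast
  have Wl_le: "Wl \<le> ?W" using Suc.prems(2) V by (smt (verit) of_nat_0_le_iff mult_nonneg_nonneg)
  have W: "0 < ?W" using Wl Wl_le by linarith
  have WA: "0 \<le> ?WA" using v by (intro sum_nonneg) auto
  have step: "measure_pmf.prob (map_pmf (insert i) (draw_wo v (S - {i}) r)) ?hit
      \<le> (if i \<in> A then 1 else 0) + real r * ?WA / Wl" if i: "i \<in> S" for i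
  proof (cases "i \<in> A")
    case True
    then show ?thesis using WA Wl by (simp add: measure_pmf.prob_le_1)
  next
    case False
    have "sum v (S - {i}) = ?W - v i" using i finS by (simp add: sum_diff1)
    moreover have "v i \<le> V" using i Suc.prems v by auto
    ultimately have "Wl + real r * V \<le> sum v (S - {i})" using Suc.prems(2) by (simp add: algebra_simps)
    then have "measure_pmf.prob (draw_wo v (S - {i}) r) ?hit \<le> real r * ?WA / Wl"
      using Suc.prems by (intro Suc.IH) auto
    moreover have "insert i -` ?hit = ?hit" using False by auto
    ultimately show ?thesis using False by (simp add: measure_map_pmf)
  qed
  have "measure_pmf.prob (draw_wo v S (Suc r)) ?hit
      = (\<Sum>i\<in>S. pmf (weighted_pmf S v) i * measure_pmf.prob (map_pmf (insert i) (draw_wo v (S - {i}) r)) ?hit)"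
    by (simp add: prob_bind_pmf expectation_pmf_finite_support[OF finS set_pmf_weighted_pmf[OF finS vS W]])
  also have "\<dots> = (\<Sum>i\<in>S. v i / ?W * measure_pmf.prob (map_pmf (insert i) (draw_wo v (S - {i}) r)) ?hit)"
    by (intro sum.cong) (simp_all add: pmf_weighted_pmf[OF finS vS W])
  also have "\<dots> \<le> (\<Sum>i\<in>S. v i / ?W * ((if i \<in> A then 1 else 0) + real r * ?WA / Wl))"
    by (rule sum_mono, rule mult_left_mono[OF step]) (use vS W in auto)
  also have "\<dots> = (\<Sum>i\<in>S. (if i \<in> A then v i else 0) / ?W + v i / ?W * (real r * ?WA / Wl))"
    by (intro sum.cong) (auto simp: algebra_simps)
  also have "\<dots> = sum v (S \<inter> A) / ?W + real r * ?WA / Wl"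
    using finS W by (simp add: sum.distrib sum_divide_distrib[symmetric]
        sum_distrib_right[symmetric] sum.inter_restrict)
  also have "\<dots> \<le> ?WA / Wl + real r * ?WA / Wl"
  proof -
    have "sum v (S \<inter> A) \<le> ?WA"
      using Suc.prems(1) S0 v by (intro sum_mono2) auto
    moreover have "0 \<le> sum v (S \<inter> A)" using vS by (intro sum_nonneg) auto
    ultimately have "sum v (S \<inter> A) / ?W \<le> ?WA / Wl"
      using WA Wl Wl_le by (intro frac_le) auto
    then show ?thesis by simp
  qed
  also have "\<dots> = real (Suc r) * ?WA / Wl" by (simp add: algebra_simps add_divide_distrib)
  finally show ?case .
qed

lemma prob_iid_list_mem_le:
  assumes fin: "finite (set_pmf p)"
  shows "measure_pmf.prob (iid_list p n) {xs. y \<in> set xs} \<le> real n * pmf p y"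
proof (induction n)
  case 0
  then show ?case by simp
next
  case (Suc n)
  let ?q = "iid_list p n"
  have step: "measure_pmf.prob (map_pmf ((#) x) ?q) {xs. y \<in> set xs}
      \<le> (if x = y then 1 else 0) + real n * pmf p y" for x
  proof (cases "x = y")
    case True
    then show ?thesis by (simp add: measure_pmf.prob_le_1 add_increasing2)
  next
    case False
    have "(#) x -` {xs. y \<in> set xs} = {xs. y \<in> set xs}" using False by auto
    then show ?thesis using Suc.IH False by (simp add: measure_map_pmf)
  qed
  have "measure_pmf.prob (iid_list p (Suc n)) {xs. y \<in> set xs}
     = (\<Sum>x\<in>set_pmf p. pmf p x * measure_pmf.prob (map_pmf ((#) x) ?q) {xs. y \<in> set xs})"
    by (simp add: prob_bind_pmf expectation_pmf_finite_support[OF fin])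
  also have "\<dots> \<le> (\<Sum>x\<in>set_pmf p. pmf p x * ((if x = y then 1 else 0) + real n * pmf p y))"
    by (intro sum_mono mult_left_mono step) auto
  also have "\<dots> = (\<Sum>x\<in>set_pmf p. (if x = y then pmf p x else 0) + real n * pmf p y * pmf p x)"
    by (intro sum.cong) (auto simp: algebra_simps)
  also have "\<dots> \<le> pmf p y + real n * pmf p y"
    using fin by (simp add: sum.distrib sum_distrib_left[symmetric] sum_pmf_eq_1 sum.delta')
  also have "\<dots> = real (Suc n) * pmf p y"
    by (simp add: algebra_simps)
  finally show ?case .
qed

definition repeats :: "'a list \<Rightarrow> nat" where
  "repeats xs = length xs - card (set xs)"

lemma repeats_Cons: "repeats (x # xs) = repeats xs + of_bool (x \<in> set xs)"
  using card_length[of xs] by (simp add: repeats_def card_insert_if)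

lemma expectation_repeats_iid_list_le:
  assumes fin: "finite (set_pmf p)" and pmax: "\<And>i. pmf p i \<le> P"
  shows "measure_pmf.expectation (iid_list p n) (\<lambda>xs. real (repeats xs)) \<le> real n * real n * P"
proof (induction n)
  case 0
  then show ?case by (simp add: repeats_def)
next
  case (Suc n)
  let ?q = "iid_list p n"
  have finq: "finite (set_pmf ?q)" by (rule finite_set_pmf_iid_list[OF fin])
  have P: "0 \<le> P" using pmax[of undefined] pmf_nonneg[of p undefined] by linarith
  have step: "measure_pmf.expectation (map_pmf ((#) x) ?q) (\<lambda>xs. real (repeats xs))
      \<le> real n * real n * P + real n * P" for x
  proof -
    have "measure_pmf.expectation (map_pmf ((#) x) ?q) (\<lambda>xs. real (repeats xs))
        = measure_pmf.expectation ?q (\<lambda>xs. real (repeats xs) + indicator {xs. x \<in> set xs} xs)"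
      by (simp add: repeats_Cons indicator_def)
    also have "\<dots> = measure_pmf.expectation ?q (\<lambda>xs. real (repeats xs))
        + measure_pmf.prob ?q {xs. x \<in> set xs}"
      by (subst Bochner_Integration.integral_add) (auto intro: integrable_measure_pmf_finite[OF finq])
    also have "\<dots> \<le> real n * real n * P + real n * P"
      using Suc.IH prob_iid_list_mem_le[OF fin, of n x] pmax[of x]
      by (meson add_mono mult_left_mono of_nat_0_le_iff order_trans)
    finally show ?thesis .
  qed
  have "measure_pmf.expectation (iid_list p (Suc n)) (\<lambda>xs. real (repeats xs))
     = (\<Sum>x\<in>set_pmf p. pmf p x * measure_pmf.expectation (map_pmf ((#) x) ?q) (\<lambda>xs. real (repeats xs)))"
    using fin finq by (simp add: pmf_expectation_bind[where A="set_pmf p"] map_pmf_def[symmetric])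
  also have "\<dots> \<le> (\<Sum>x\<in>set_pmf p. pmf p x * (real n * real n * P + real n * P))"
    by (intro sum_mono mult_left_mono step) auto
  also have "\<dots> = real n * real n * P + real n * P"
    using fin by (simp add: sum_distrib_right[symmetric] sum_pmf_eq_1)
  also have "\<dots> \<le> real (Suc n) * real (Suc n) * P"
    using P by (simp add: algebra_simps)
  finally show ?case .
qed

text \<open>Conditionally on \<open>J\<close>, the \<open>repeats J\<close> draws without replacement are made while the
  remaining weight is at least \<open>sum v {..<L} - N V\<close>, and the expected number of repeats is at
  most \<open>N\<^sup>2 V / sum v {..<L}\<close>.\<close>
lemma prob_K_construction_hits_le:
  fixes v :: "nat \<Rightarrow> real"
  assumes v: "\<And>i. i < L \<Longrightarrow> 0 \<le> v i \<and> v i \<le> V" and V: "0 \<le> V"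
    and W: "0 < sum v {..<L} - real N * V"
  shows "measure_pmf.prob (bind_pmf (iid_list (weighted_pmf {..<L} v) N)
            (\<lambda>J. draw_wo v ({..<L} - set J) (N - card (set J)))) {K. K \<inter> A \<noteq> {}}
     \<le> real N * real N * (V / sum v {..<L}) * sum v (A \<inter> {..<L}) / (sum v {..<L} - real N * V)"
proof -
  define W0 where "W0 = sum v {..<L}"
  define Wl where "Wl = W0 - real N * V"
  define WA where "WA = sum v (A \<inter> {..<L})"
  define p where "p = weighted_pmf {..<L} v"
  have Wl: "0 < Wl" using W by (simp add: Wl_def W0_def)
  have W0: "0 < W0" using Wl V unfolding Wl_def by (smt (verit) mult_nonneg_nonneg of_nat_0_le_iff)
  have WA: "0 \<le> WA" unfolding WA_def using v by (intro sum_nonneg) auto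
  have v_nonneg: "\<And>i. i \<in> {..<L} \<Longrightarrow> 0 \<le> v i" using v by auto
  have set_p: "set_pmf p \<subseteq> {..<L}"
    unfolding p_def using set_pmf_weighted_pmf v_nonneg W0 W0_def by blast
  have fin_p: "finite (set_pmf p)" using set_p finite_subset by blast
  have pmf_p: "pmf p i \<le> V / W0" for i
    using pmf_weighted_pmf[of "{..<L}" v i] v_nonneg W0 v[of i] V
    by (auto simp: p_def W0_def intro: divide_right_mono)
  have draw: "measure_pmf.prob (draw_wo v ({..<L} - set J) (N - card (set J))) {K. K \<inter> A \<noteq> {}}
      \<le> real (repeats J) * WA / Wl" if J: "J \<in> set_pmf (iid_list p N)" for J
  proof -
    have len: "length J = N" and set_J: "set J \<subseteq> {..<L}" using set_pmf_iid_list[OF J] set_p by auto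
    have card_J: "card (set J) \<le> N" using len card_length by metis
    have "sum v (set J) \<le> real (card (set J)) * V"
      using sum_bounded_above[of "set J" v V] set_J v by auto
    moreover have "sum v ({..<L} - set J) = W0 - sum v (set J)"
      using set_J by (simp add: W0_def sum_diff)
    ultimately have "Wl + real (N - card (set J)) * V \<le> sum v ({..<L} - set J)"
      using card_J unfolding Wl_def by (simp add: of_nat_diff algebra_simps)
    then show ?thesis
      using prob_draw_wo_hits_le[of "{..<L}" v V Wl, OF _ _ Wl V] v len
      by (auto simp: repeats_def WA_def)
  qed
  have "measure_pmf.prob (bind_pmf (iid_list p N)
            (\<lambda>J. draw_wo v ({..<L} - set J) (N - card (set J)))) {K. K \<inter> A \<noteq> {}}
      \<le> measure_pmf.expectation (iid_list p N) (\<lambda>J. real (repeats J) * WA / Wl)"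
    unfolding prob_bind_pmf
    by (rule integral_mono_AE)
       (auto intro!: integrable_measure_pmf_finite finite_set_pmf_iid_list fin_p AE_pmfI draw)
  also have "\<dots> = measure_pmf.expectation (iid_list p N) (\<lambda>J. real (repeats J)) * WA / Wl"
    by simp
  also have "\<dots> \<le> real N * real N * (V / W0) * WA / Wl"
    using WA Wl by (intro divide_right_mono mult_right_mono expectation_repeats_iid_list_le fin_p pmf_p) auto
  finally show ?thesis unfolding p_def WA_def Wl_def W0_def .
qed

section \<open>Measurability in the atoms\<close>

lemma weighted_pmf_zero: "sum v S = 0 \<Longrightarrow> weighted_pmf S v = embed_pmf (\<lambda>_. 0)"
  unfolding weighted_pmf_def by (simp cong: if_cong)

lemma measure_pmf_prob_eq_sum:
  assumes "finite S" "set_pmf p \<subseteq> S"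
  shows "measure_pmf.prob p A = (\<Sum>i\<in>A \<inter> S. pmf p i)"
proof -
  have "measure_pmf.prob p A = (\<Sum>i\<in>S. indicator A i * pmf p i)"
    using assms by (subst integral_measure_pmf_real[symmetric]) auto
  also have "\<dots> = (\<Sum>i\<in>A \<inter> S. pmf p i)"
    using assms by (simp add: sum.inter_restrict indicator_def if_distrib Int_commute cong: if_cong)
  finally show ?thesis .
qed

lemma measurable_subprob_algebra_pmf:
  assumes "\<And>A. (\<lambda>x. emeasure (measure_pmf (P x)) A) \<in> borel_measurable M"
  shows "(\<lambda>x. measure_pmf (P x)) \<in> M \<rightarrow>\<^sub>M subprob_algebra (count_space UNIV)"
  by (rule measurable_subprob_algebra) (auto simp: measure_pmf.subprob_space_axioms assms)

lemma measurable_weighted_pmf: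
  assumes S: "finite S" and v: "\<And>i. (\<lambda>x. v x i) \<in> borel_measurable M"
    and v_nonneg: "\<And>x i. 0 \<le> v x i"
  shows "(\<lambda>x. measure_pmf (weighted_pmf S (v x))) \<in> M \<rightarrow>\<^sub>M subprob_algebra (count_space UNIV)"
proof (rule measurable_subprob_algebra_pmf)
  fix A :: "nat set"
  have "emeasure (measure_pmf (weighted_pmf S (v x))) A =
     (if sum (v x) S = 0 then emeasure (measure_pmf (embed_pmf (\<lambda>_. 0))) A
      else ennreal (\<Sum>i\<in>A \<inter> S. v x i / sum (v x) S))" for x
  proof (cases "sum (v x) S = 0")
    case False
    then have pos: "0 < sum (v x) S" using v_nonneg sum_nonneg[of S "v x"] by fastforce
    show ?thesis
      using False pmf_weighted_pmf[OF S _ pos] set_pmf_weighted_pmf[OF S _ pos]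
      by (simp add: measure_pmf.emeasure_eq_measure measure_pmf_prob_eq_sum[OF S] v_nonneg)
  qed (simp add: weighted_pmf_zero)
  then show "(\<lambda>x. emeasure (measure_pmf (weighted_pmf S (v x))) A) \<in> borel_measurable M"
    using v by simp measurable
qed

lemma measurable_map_pmf:
  assumes "(\<lambda>x. measure_pmf (P x)) \<in> M \<rightarrow>\<^sub>M subprob_algebra (count_space UNIV)"
  shows "(\<lambda>x. measure_pmf (map_pmf f (P x))) \<in> M \<rightarrow>\<^sub>M subprob_algebra (count_space UNIV)"
proof -
  have "(\<lambda>x. distr (measure_pmf (P x)) (count_space UNIV) f) \<in> M \<rightarrow>\<^sub>M subprob_algebra (count_space UNIV)"
    by (rule measurable_compose[OF assms measurable_distr]) simp
  then show ?thesis by (simp add: map_pmf_rep_eq)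
qed

lemma measurable_bind_pmf:
  fixes g :: "'a \<Rightarrow> 'i::countable \<Rightarrow> 'c pmf"
  assumes "(\<lambda>x. measure_pmf (P x)) \<in> M \<rightarrow>\<^sub>M subprob_algebra (count_space UNIV)"
    and "\<And>i. (\<lambda>x. measure_pmf (g x i)) \<in> M \<rightarrow>\<^sub>M subprob_algebra (count_space UNIV)"
  shows "(\<lambda>x. measure_pmf (bind_pmf (P x) (g x))) \<in> M \<rightarrow>\<^sub>M subprob_algebra (count_space UNIV)"
proof -
  have "(\<lambda>y. measure_pmf (g (fst y) (snd y))) \<in> M \<Otimes>\<^sub>M count_space UNIV \<rightarrow>\<^sub>M subprob_algebra (count_space UNIV)"
    by (rule measurable_compose_countable'[where f="\<lambda>i y. measure_pmf (g (fst y) i)" and I=UNIV])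
       (auto intro: measurable_compose[OF measurable_fst assms(2)])
  then have "(\<lambda>x. measure_pmf (P x) \<bind> (\<lambda>i. measure_pmf (g x i))) \<in> M \<rightarrow>\<^sub>M subprob_algebra (count_space UNIV)"
    by (intro measurable_bind'[OF assms(1)]) (simp add: case_prod_beta)
  then show ?thesis by (simp add: measure_pmf_bind)
qed

lemma measurable_draw_wo:
  assumes v: "\<And>i. (\<lambda>x. v x i) \<in> borel_measurable M" and v_nonneg: "\<And>x i. 0 \<le> v x i"
  shows "finite S \<Longrightarrow> (\<lambda>x. measure_pmf (draw_wo (v x) S r)) \<in> M \<rightarrow>\<^sub>M subprob_algebra (count_space UNIV)"
proof (induction r arbitrary: S)
  case 0
  show ?case by (simp add: measurable_subprob_algebra_pmf)
next
  case (Suc r)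
  show ?case
    unfolding draw_wo.simps
    by (intro measurable_bind_pmf measurable_weighted_pmf measurable_map_pmf Suc v v_nonneg)
       (use Suc.prems in auto)
qed

lemma measurable_iid_list:
  fixes P :: "'a \<Rightarrow> 'b::countable pmf"
  assumes "(\<lambda>x. measure_pmf (P x)) \<in> M \<rightarrow>\<^sub>M subprob_algebra (count_space UNIV)"
  shows "(\<lambda>x. measure_pmf (iid_list (P x) n)) \<in> M \<rightarrow>\<^sub>M subprob_algebra (count_space UNIV)"
proof (induction n)
  case 0
  show ?case by (simp add: measurable_subprob_algebra_pmf)
next
  case (Suc n)
  show ?case
    unfolding iid_list.simps
    by (rule measurable_bind_pmf[where g="\<lambda>x i. map_pmf ((#) i) (iid_list (P x) n)"])
       (intro assms measurable_map_pmf Suc)+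
qed

lemma measurable_K_pmf:
  assumes w: "\<And>i. (\<lambda>x. w x i) \<in> borel_measurable M"
  shows "(\<lambda>x. measure_pmf (K_pmf \<gamma> \<beta> (w x) N)) \<in> M \<rightarrow>\<^sub>M subprob_algebra (count_space UNIV)"
proof -
  define v where "v x i = w x i powr \<beta>" for x i
  have v: "\<And>i. (\<lambda>x. v x i) \<in> borel_measurable M" unfolding v_def using w by measurable
  have v_nonneg: "\<And>x i. 0 \<le> v x i" unfolding v_def by simp
  show ?thesis
    unfolding K_pmf_def Let_def v_def[symmetric]
    by (intro measurable_bind_pmf measurable_iid_list measurable_weighted_pmf measurable_draw_wo
        v v_nonneg) auto
qed

lemma prob_K_pmf_card_eq_0:
  "measure_pmf.prob (K_pmf \<gamma> \<beta> w N) {K. card {k\<in>K. c \<le> w k} = 0}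
   = measure_pmf.prob (K_pmf \<gamma> \<beta> w N) {K. \<forall>k\<in>K. w k < c}"
proof -
  have "{K. card {k\<in>K. c \<le> w k} = 0} \<inter> set_pmf (K_pmf \<gamma> \<beta> w N)
      = {K. \<forall>k\<in>K. w k < c} \<inter> set_pmf (K_pmf \<gamma> \<beta> w N)"
    by (auto simp: not_le dest: finite_set_pmf_K_pmf)
  then have "measure_pmf.prob (K_pmf \<gamma> \<beta> w N) ({K. card {k\<in>K. c \<le> w k} = 0} \<inter> set_pmf (K_pmf \<gamma> \<beta> w N))
      = measure_pmf.prob (K_pmf \<gamma> \<beta> w N) ({K. \<forall>k\<in>K. w k < c} \<inter> set_pmf (K_pmf \<gamma> \<beta> w N))"
    by simp
  then show ?thesis by (simp only: measure_Int_set_pmf)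
qed

lemma borel_measurable_prob_K_pmf_card_eq_0:
  fixes w :: "'a \<Rightarrow> nat \<Rightarrow> real"
  assumes w: "\<And>i. (\<lambda>x. w x i) \<in> borel_measurable M"
  shows "(\<lambda>x. measure_pmf.prob (K_pmf \<gamma> \<beta> (w x) N) {K. card {k\<in>K. c \<le> w x k} = 0})
    \<in> borel_measurable M"
proof -
  have pred: "Measurable.pred (M \<Otimes>\<^sub>M count_space UNIV) (\<lambda>y. \<forall>k. k \<in> snd y \<longrightarrow> w (fst y) k < c)"
  proof (intro pred_intros_countable(1) pred_intros_logic(4))
    fix k :: nat
    show "Measurable.pred (M \<Otimes>\<^sub>M count_space UNIV) (\<lambda>y. k \<in> snd y)"
      by (rule measurable_compose[OF measurable_snd]) simp
    show "Measurable.pred (M \<Otimes>\<^sub>M count_space UNIV) (\<lambda>y. w (fst y) k < c)"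
      using w[of k] by measurable
  qed
  have "(\<lambda>(x, K). indicator {K. \<forall>k\<in>K. w x k < c} K :: ennreal)
      \<in> borel_measurable (M \<Otimes>\<^sub>M count_space UNIV)"
  proof -
    have eq: "(\<lambda>(x, K). indicator {K. \<forall>k\<in>K. w x k < c} K :: ennreal)
        = (\<lambda>y. if \<forall>k. k \<in> snd y \<longrightarrow> w (fst y) k < c then 1 else 0)"
      by (auto simp: fun_eq_iff indicator_def)
    show ?thesis unfolding eq using pred by measurable
  qed
  then have "(\<lambda>x. \<integral>\<^sup>+K. indicator {K. \<forall>k\<in>K. w x k < c} K \<partial>measure_pmf (K_pmf \<gamma> \<beta> (w x) N))
      \<in> borel_measurable M"
    by (rule nn_integral_measurable_subprob_algebra2[OF _ measurable_K_pmf[OF w]])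
  then have "(\<lambda>x. emeasure (measure_pmf (K_pmf \<gamma> \<beta> (w x) N)) {K. \<forall>k\<in>K. w x k < c}) \<in> borel_measurable M"
    by simp
  then show ?thesis
    unfolding prob_K_pmf_card_eq_0 unfolding measure_def by (rule borel_measurable_enn2real)
qed

section \<open>Poisson tail bounds\<close>

definition poisson_law :: "'a measure \<Rightarrow> ('a \<Rightarrow> nat) \<Rightarrow> real \<Rightarrow> bool" where
  "poisson_law M X l \<longleftrightarrow> (\<forall>k. measure M {x\<in>space M. X x = k} = l ^ k / fact k * exp (- l))"

lemma power_div_fact_le_exp:
  assumes "0 \<le> (x::real)"
  shows "x ^ k / fact k \<le> exp x"
proof -
  obtain t where "exp x = (\<Sum>m<Suc k. x ^ m / fact m) + exp t / fact (Suc k) * x ^ Suc k"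
    using Maclaurin_exp_le by blast
  moreover have "x ^ k / fact k \<le> (\<Sum>m<Suc k. x ^ m / fact m)"
    using assms by (intro member_le_sum) auto
  moreover have "0 \<le> exp t / fact (Suc k) * x ^ Suc k" using assms by simp
  ultimately show ?thesis by linarith
qed

lemma power_div_fact_le:
  assumes "0 \<le> (l::real)" "0 < m" "k \<le> m" "k = m \<or> real m \<le> l"
  shows "l ^ k / fact k \<le> (exp 1 * l / real m) ^ m"
proof -
  have "l ^ k / fact k = (l / real m) ^ k * (real m ^ k / fact k)"
    using assms by (simp add: power_divide)
  also have "\<dots> \<le> (l / real m) ^ m * exp (real m)"
  proof (rule mult_mono)
    show "(l / real m) ^ k \<le> (l / real m) ^ m"
      using assms by (auto intro: power_increasing)
  qed (use assms power_div_fact_le_exp in auto)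
  also have "exp (real m) = exp 1 ^ m" by (simp add: exp_of_nat_mult[symmetric])
  also have "(l / real m) ^ m * exp 1 ^ m = (exp 1 * l / real m) ^ m"
    by (simp add: power_mult_distrib[symmetric] mult.commute)
  finally show ?thesis .
qed

context prob_space
begin

lemma sets_poisson_law:
  assumes X: "poisson_law M X l" and l: "0 < l"
  shows "{x\<in>space M. P (X x)} \<in> sets M"
proof -
  have "X \<in> M \<rightarrow>\<^sub>M count_space UNIV"
  proof (rule measurable_count_space_eq2_countable[THEN iffD2], intro conjI ballI)
    fix k
    have "prob {x\<in>space M. X x = k} \<noteq> 0"
      using X l by (simp add: poisson_law_def)
    moreover have "X -` {k} \<inter> space M = {x\<in>space M. X x = k}" by auto
    ultimately show "X -` {k} \<inter> space M \<in> sets M" using measure_notin_sets by metis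
  qed simp
  moreover have "{x\<in>space M. P (X x)} = X -` {n. P n} \<inter> space M" by auto
  ultimately show ?thesis using measurable_sets by simp
qed

lemma prob_poisson_law_less:
  assumes X: "poisson_law M X l" and l: "0 < l"
  shows "prob {x\<in>space M. X x < m} = (\<Sum>k<m. l ^ k / fact k * exp (- l))"
proof -
  have "{x\<in>space M. X x < m} = (\<Union>k<m. {x\<in>space M. X x = k})" by auto
  also have "prob \<dots> = (\<Sum>k<m. prob {x\<in>space M. X x = k})"
    using sets_poisson_law[OF X l] by (intro finite_measure_finite_Union) (auto simp: disjoint_family_on_def)
  finally show ?thesis using X by (simp add: poisson_law_def)
qed

lemma prob_poisson_law_ge_le:
  assumes X: "poisson_law M X l" and l: "0 < l" and m: "0 < m"
  shows "prob {x\<in>space M. m \<le> X x} \<le> (exp 1 * l / real m) ^ m"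
proof -
  obtain t where t: "\<bar>t\<bar> \<le> \<bar>l\<bar>" and exp_l: "exp l = (\<Sum>k<m. l ^ k / fact k) + exp t / fact m * l ^ m"
    using Maclaurin_exp_le by blast
  have "{x\<in>space M. m \<le> X x} = space M - {x\<in>space M. X x < m}" by auto
  then have "prob {x\<in>space M. m \<le> X x} = 1 - (\<Sum>k<m. l ^ k / fact k) * exp (- l)"
    using prob_compl sets_poisson_law[OF X l] prob_poisson_law_less[OF X l]
    by (simp add: sum_distrib_right)
  also have "\<dots> = exp (- l) * (exp l - (\<Sum>k<m. l ^ k / fact k))"
    using exp_minus_inverse[of l] by (simp add: right_diff_distrib mult.commute)
  also have "\<dots> = exp (t - l) * (l ^ m / fact m)"
    unfolding exp_l by (simp add: exp_diff exp_minus field_simps)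
  also have "\<dots> \<le> l ^ m / fact m"
    using t l by (intro mult_left_le_one_le) auto
  also have "\<dots> \<le> (exp 1 * l / real m) ^ m"
    using l m by (intro power_div_fact_le) auto
  finally show ?thesis .
qed

lemma prob_poisson_law_ge_mult_le:
  assumes X: "poisson_law M X l" and l: "0 < l" and K: "exp 1 \<le> K"
  shows "prob {x\<in>space M. K * l \<le> real (X x)} \<le> exp 1 / K"
proof -
  define m where "m = nat \<lceil>K * l\<rceil>"
  have K0: "0 < K" using K exp_gt_zero[of 1] by linarith
  have Kl_m: "K * l \<le> real m" unfolding m_def by linarith
  have m: "0 < m" using K0 l unfolding m_def by simp
  have "exp 1 * l / real m \<le> exp 1 * l / (K * l)"
    using Kl_m K0 l m by (intro divide_left_mono) auto
  then have base: "exp 1 * l / real m \<le> exp 1 / K" using l by simp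
  have "exp 1 / K \<le> 1" using K K0 by simp
  have "{x\<in>space M. K * l \<le> real (X x)} \<subseteq> {x\<in>space M. m \<le> X x}"
    unfolding m_def by (auto simp: nat_le_iff ceiling_le_iff)
  then have "prob {x\<in>space M. K * l \<le> real (X x)} \<le> prob {x\<in>space M. m \<le> X x}"
    by (intro finite_measure_mono sets_poisson_law[OF X l])
  also have "\<dots> \<le> (exp 1 * l / real m) ^ m"
    by (rule prob_poisson_law_ge_le[OF X l m])
  also have "\<dots> \<le> (exp 1 * l / real m) ^ 1"
  proof (rule power_decreasing)
    show "exp 1 * l / real m \<le> 1" using base \<open>exp 1 / K \<le> 1\<close> by linarith
  qed (use l m in auto)
  finally show ?thesis using base by simp
qed

lemma prob_poisson_law_less_div_le:
  assumes X: "poisson_law M X l" and l: "2 \<le> l"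
  shows "prob {x\<in>space M. real (X x) < l / exp 2} \<le> (l + 1) * exp (3 - l / 4)"
proof -
  define m where "m = nat \<lceil>l / exp 2\<rceil>"
  have exp2: "4 \<le> exp (2::real)"
    using exp_ge_add_one_self[of 1] mult_mono[of 2 "exp 1" 2 "exp (1::real)"]
    by (simp add: exp_add[symmetric])
  have m_ge: "l / exp 2 \<le> real m" unfolding m_def by linarith
  have "real m = of_int \<lceil>l / exp 2\<rceil>" using l by (simp add: m_def)
  also have "\<dots> \<le> l / exp 2 + 1" by (rule of_int_ceiling_le_add_one)
  also have "l / exp 2 \<le> l / 4" using exp2 l by (intro divide_left_mono) auto
  finally have m_le: "real m \<le> l / 4 + 1" by simp
  have m: "0 < m" using l unfolding m_def by simp
  have "{x\<in>space M. real (X x) < l / exp 2} \<subseteq> {x\<in>space M. X x < m}"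
    using m_ge by auto
  then have "prob {x\<in>space M. real (X x) < l / exp 2} \<le> prob {x\<in>space M. X x < m}"
    using l by (intro finite_measure_mono sets_poisson_law[OF X]) auto
  also have "\<dots> = (\<Sum>k<m. l ^ k / fact k * exp (- l))"
    using l by (intro prob_poisson_law_less[OF X]) auto
  also have "\<dots> \<le> (\<Sum>k<m. (exp 1 * l / real m) ^ m * exp (- l))"
    using l m m_le by (intro sum_mono mult_right_mono power_div_fact_le) auto
  also have "\<dots> \<le> real m * exp (3 * real m) * exp (- l)"
  proof -
    have "exp 1 * l / real m \<le> exp 1 * exp 2"
      using m_ge m by (simp add: field_simps mult_left_mono)
    then have "(exp 1 * l / real m) ^ m \<le> exp 3 ^ m"
      using l by (intro power_mono) (auto simp: exp_add[symmetric])
    also have "\<dots> = exp (3 * real m)" by (simp add: exp_of_nat_mult[symmetric] mult.commute)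
    finally have "(exp 1 * l / real m) ^ m * exp (- l) \<le> exp (3 * real m) * exp (- l)"
      by (rule mult_right_mono) simp
    then show ?thesis by (simp add: mult_left_mono mult.assoc)
  qed
  also have "\<dots> = real m * exp (3 * real m - l)"
    by (simp add: exp_diff exp_minus field_simps)
  also have "\<dots> \<le> (l + 1) * exp (3 - l / 4)"
    using m_le l by (intro mult_mono) auto
  finally show ?thesis .
qed

end

section \<open>The Poisson point process\<close>

lemma emeasure_ppp_intensity_atLeast:
  assumes "0 < t"
  shows "emeasure ppp_intensity {t..} = ennreal (1 / t)"
proof -
  have "emeasure ppp_intensity {t..} = (\<integral>\<^sup>+x. ennreal (indicator {t..} x * (1 / x ^ 2)) \<partial>lborel)"
    unfolding ppp_intensity_def using assms
    by (subst emeasure_density) (auto intro!: nn_integral_cong simp: indicator_def)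
  also have "\<dots> = ennreal (1 / (real (2 - 1) * t ^ (2 - 1)))"
    using assms by (intro nn_integral_has_integral_lebesgue has_integral_inverse_power_to_inf) auto
  finally show ?thesis by simp
qed

lemma poisson_atoms_prob_space: "poisson_atoms M w \<Longrightarrow> prob_space M"
  unfolding poisson_atoms_def by blast

lemma poisson_atoms_borel_measurable: "poisson_atoms M w \<Longrightarrow> (\<lambda>\<omega>. w \<omega> i) \<in> borel_measurable M"
  unfolding poisson_atoms_def by blast

lemma atom_count_atLeast: "atom_count v {t..} = card {i. t \<le> v i}"
  by (simp add: atom_count_def)

lemma poisson_atoms_atLeast:
  assumes "poisson_atoms M w" "0 < t"
  shows "AE \<omega> in M. finite {i. t \<le> w \<omega> i}"
    and "poisson_law M (\<lambda>\<omega>. atom_count (w \<omega>) {t..}) (1 / t)"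
proof -
  have "{t..} \<in> sets borel" "emeasure ppp_intensity {t..} < \<infinity>"
      and "measure ppp_intensity {t..} = 1 / t"
    using emeasure_ppp_intensity_atLeast[OF assms(2)] assms(2) by (simp_all add: measure_def)
  then show "AE \<omega> in M. finite {i. t \<le> w \<omega> i}"
    and "poisson_law M (\<lambda>\<omega>. atom_count (w \<omega>) {t..}) (1 / t)"
    using assms(1) unfolding poisson_atoms_def poisson_law_def by auto
qed

definition regular_atoms :: "(nat \<Rightarrow> real) \<Rightarrow> bool" where
  "regular_atoms v \<longleftrightarrow> (\<forall>i. 0 < v i) \<and> (\<forall>i. v (Suc i) < v i) \<and> (\<forall>t>0. finite {i. t \<le> v i})"

lemma AE_poisson_atoms_regular:
  assumes "poisson_atoms M w"
  shows "AE \<omega> in M. regular_atoms (w \<omega>)"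
proof -
  have "AE \<omega> in M. \<forall>n. finite {i. 1 / real (Suc n) \<le> w \<omega> i}"
    using poisson_atoms_atLeast(1)[OF assms] by (simp add: AE_all_countable)
  moreover have "AE \<omega> in M. (\<forall>i. 0 < w \<omega> i) \<and> (\<forall>i. w \<omega> (Suc i) < w \<omega> i)"
    using assms unfolding poisson_atoms_def by blast
  ultimately show ?thesis
  proof eventually_elim
    case (elim \<omega>)
    have "finite {i. t \<le> w \<omega> i}" if t: "0 < t" for t
    proof -
      obtain n where "1 / real (Suc n) < t"
        using reals_Archimedean[OF t] by (auto simp: inverse_eq_divide)
      then have "{i. t \<le> w \<omega> i} \<subseteq> {i. 1 / real (Suc n) \<le> w \<omega> i}" by auto
      then show ?thesis using elim finite_subset by blast
    qed
    then show ?case using elim by (simp add: regular_atoms_def)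
  qed
qed

section \<open>Weight estimates for a fixed configuration\<close>

lemma lessThan_subset_level_set:
  fixes w :: "nat \<Rightarrow> real"
  assumes dec: "\<And>i. w (Suc i) \<le> w i" and fin: "finite {i. t \<le> w i}"
    and m: "m \<le> card {i. t \<le> w i}"
  shows "{..<m} \<subseteq> {i. t \<le> w i}"
proof
  fix k assume k: "k \<in> {..<m}"
  show "k \<in> {i. t \<le> w i}"
  proof (rule ccontr)
    assume "k \<notin> {i. t \<le> w i}"
    then have "{i. t \<le> w i} \<subseteq> {..<k}"
      using lift_Suc_antimono_le[of w, OF dec] by (force simp: not_less)
    then have "card {i. t \<le> w i} \<le> k" using card_mono[of "{..<k}"] by fastforce
    then show False using m k by simp
  qed
qed

lemma sum_powr_ge_card_level_set:
  fixes w :: "nat \<Rightarrow> real"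
  assumes dec: "\<And>i. w (Suc i) \<le> w i" and fin: "finite {i. b \<le> w i}"
    and b: "0 \<le> b" and \<beta>: "0 \<le> \<beta>" and m: "m \<le> card {i. b \<le> w i}" "m \<le> L"
  shows "real m * b powr \<beta> \<le> (\<Sum>i<L. w i powr \<beta>)"
proof -
  have "{..<m} \<subseteq> {i. b \<le> w i}" by (rule lessThan_subset_level_set[OF dec fin m(1)])
  then have "real m * b powr \<beta> \<le> (\<Sum>i<m. w i powr \<beta>)"
    using sum_mono[of "{..<m}" "\<lambda>_. b powr \<beta>" "\<lambda>i. w i powr \<beta>"] b \<beta>
    by (force intro: powr_mono2)
  also have "\<dots> \<le> (\<Sum>i<L. w i powr \<beta>)" using m(2) by (intro sum_mono2) auto
  finally show ?thesis .
qed

text \<open>Each \<open>y \<in> [t 0, t J)\<close> lies in some \<open>[t k, t (k+1))\<close>, so \<open>y\<^sup>\<beta>\<close> is bounded by the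
  summand of that layer.\<close>
lemma powr_le_sum_layers:
  fixes t :: "nat \<Rightarrow> real"
  assumes y: "t 0 \<le> y" "y < t J" "0 \<le> y" and \<beta>: "0 \<le> \<beta>"
  shows "y powr \<beta> \<le> (\<Sum>j<J. if t j \<le> y then t (Suc j) powr \<beta> else 0)"
proof -
  define k where "k = Max {j. j < J \<and> t j \<le> y}"
  have J: "0 < J" using y by (cases J) auto
  have fin: "finite {j. j < J \<and> t j \<le> y}" by simp
  have "{j. j < J \<and> t j \<le> y} \<noteq> {}" using y J by auto
  then have k: "k < J \<and> t k \<le> y"
    using Max_in[OF fin] unfolding k_def by simp
  have "y < t (Suc k)"
  proof (cases "Suc k < J")
    case True
    then show ?thesis using Max_ge[OF fin, of "Suc k"] unfolding k_def[symmetric] by fastforce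
  next
    case False
    then have "Suc k = J" using k by simp
    then show ?thesis using y by simp
  qed
  then have "y powr \<beta> \<le> (if t k \<le> y then t (Suc k) powr \<beta> else 0)"
    using k y \<beta> by (simp add: powr_mono2)
  also have "\<dots> \<le> (\<Sum>j<J. if t j \<le> y then t (Suc j) powr \<beta> else 0)"
    using k by (intro member_le_sum) auto
  finally show ?thesis .
qed

lemma sum_powr_le_sum_layers:
  fixes w t x :: "nat \<Rightarrow> real"
  assumes F: "finite F" "\<And>i. i \<in> F \<Longrightarrow> t 0 \<le> w i \<and> w i < t J \<and> 0 \<le> w i" and \<beta>: "0 \<le> \<beta>"
    and layers: "\<And>j. j < J \<Longrightarrow> finite {i. t j \<le> w i} \<and> real (card {i. t j \<le> w i}) \<le> x j"
  shows "(\<Sum>i\<in>F. w i powr \<beta>) \<le> (\<Sum>j<J. x j * t (Suc j) powr \<beta>)"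
proof -
  have "(\<Sum>i\<in>F. w i powr \<beta>) \<le> (\<Sum>i\<in>F. \<Sum>j<J. if t j \<le> w i then t (Suc j) powr \<beta> else 0)"
    using F \<beta> by (intro sum_mono powr_le_sum_layers) auto
  also have "\<dots> = (\<Sum>j<J. real (card (F \<inter> {i. t j \<le> w i})) * t (Suc j) powr \<beta>)"
    using F by (subst sum.swap) (simp add: sum.If_cases Int_def)
  also have "\<dots> \<le> (\<Sum>j<J. x j * t (Suc j) powr \<beta>)"
  proof (rule sum_mono)
    fix j assume "j \<in> {..<J}"
    then have "real (card (F \<inter> {i. t j \<le> w i})) \<le> x j"
      using layers[of j] card_mono[of "{i. t j \<le> w i}" "F \<inter> {i. t j \<le> w i}"] by force
    then show "real (card (F \<inter> {i. t j \<le> w i})) * t (Suc j) powr \<beta> \<le> x j * t (Suc j) powr \<beta>"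
      by (intro mult_right_mono) auto
  qed
  finally show ?thesis .
qed

lemma prob_K_pmf_avoids_ge:
  fixes w t x :: "nat \<Rightarrow> real"
  assumes w: "\<And>i. 0 \<le> w i" "\<And>i. w i < U" and U: "1 \<le> U" and \<beta>: "0 < \<beta>" "\<beta> \<le> 1"
    and W: "W \<le> (\<Sum>i<num_slots \<gamma> N. w i powr \<beta>)" "0 < W - real N * U"
    and layers: "\<And>j. j < J \<Longrightarrow> finite {i. t j \<le> w i} \<and> real (card {i. t j \<le> w i}) \<le> x j"
    and top: "U \<le> t J"
  shows "1 - real N * real N * (U / W) * (\<Sum>j<J. x j * t (Suc j) powr \<beta>) / (W - real N * U)
    \<le> measure_pmf.prob (K_pmf \<gamma> \<beta> w N) {K. \<forall>k\<in>K. w k < t 0}"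
proof -
  define L where "L = num_slots \<gamma> N"
  define v where "v i = w i powr \<beta>" for i
  define A where "A = {k. t 0 \<le> w k}"
  define W0 where "W0 = sum v {..<L}"
  define S where "S = (\<Sum>j<J. x j * t (Suc j) powr \<beta>)"
  have v: "0 \<le> v i \<and> v i \<le> U" for i
  proof -
    have "v i \<le> U powr \<beta>" unfolding v_def using w \<beta> by (intro powr_mono2) (auto intro: less_imp_le)
    also have "\<dots> \<le> U" using U \<beta> powr_mono[of \<beta> 1 U] by simp
    finally show ?thesis by (simp add: v_def)
  qed
  have W0: "W \<le> W0" using W(1) by (simp add: W0_def L_def v_def)
  have W_pos: "0 < W" using W(2) U by (smt (verit) mult_nonneg_nonneg of_nat_0_le_iff)
  have "sum v (A \<inter> {..<L}) \<le> S"
    unfolding v_def S_def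
    by (rule sum_powr_le_sum_layers[OF _ _ _ layers]) (use w top \<beta> in \<open>auto simp: A_def intro: less_le_trans\<close>)
  moreover have "0 \<le> sum v (A \<inter> {..<L})" using v by (intro sum_nonneg) auto
  ultimately have "real N * real N * (U / W0) * sum v (A \<inter> {..<L}) / (W0 - real N * U)
      \<le> real N * real N * (U / W) * S / (W - real N * U)"
    using W W0 W_pos U
    by (intro frac_le mult_mono divide_left_mono mult_nonneg_nonneg) auto
  moreover have "measure_pmf.prob (K_pmf \<gamma> \<beta> w N) {K. K \<inter> A \<noteq> {}}
      \<le> real N * real N * (U / W0) * sum v (A \<inter> {..<L}) / (W0 - real N * U)"
    unfolding K_pmf_def Let_def L_def[symmetric] v_def[symmetric] W0_def
    using v U W W0 by (intro prob_K_construction_hits_le) (auto simp: W0_def)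
  moreover have "{K. \<forall>k\<in>K. w k < t 0} = UNIV - {K. K \<inter> A \<noteq> {}}"
    unfolding A_def by (auto simp: not_le)
  ultimately show ?thesis
    using measure_pmf.prob_compl[of "{K. K \<inter> A \<noteq> {}}" "K_pmf \<gamma> \<beta> w N"] by (simp add: S_def)
qed

section \<open>Asymptotics\<close>

locale poisson_sampling =
  fixes \<gamma> \<beta> :: real and M :: "'a measure" and w :: "'a \<Rightarrow> nat \<Rightarrow> real"
  assumes gamma_gt_1: "1 < \<gamma>" and beta_pos: "0 < \<beta>" and beta_less_1: "\<beta> < 1"
    and beta_small: "\<beta> < 1 - 1 / \<gamma>" and poisson: "poisson_atoms M w"
begin

sublocale prob_space M by (rule poisson_atoms_prob_space[OF poisson])

text \<open>The hitting probability comes out as \<open>O(N\<^bsup>3\<delta> - (\<gamma>(1-\<beta>)-1)\<^esup>)\<close>, so any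
  \<open>\<delta> < (\<gamma>(1-\<beta>)-1)/3\<close> would do.\<close>
definition \<delta> :: real where "\<delta> = (\<gamma> * (1 - \<beta>) - 1) / 12"

definition \<alpha> :: real where "\<alpha> = \<gamma> - 1 / (1 - \<beta>)"

text \<open>The layers \<open>[level N j, level N (j+1))\<close>, \<open>j < depth\<close>, cover all atoms between
  \<open>N\<^bsup>-(\<alpha>+\<delta>)\<^esup>\<close> and \<open>N\<^sup>\<delta>\<close>, as \<open>depth\<close> is chosen with \<open>level N depth \<ge> N\<^sup>\<delta>\<close>.\<close>
definition depth :: nat where "depth = nat \<lceil>(\<alpha> + 2 * \<delta>) / \<delta>\<rceil>"

definition level :: "nat \<Rightarrow> nat \<Rightarrow> real" where
  "level N j = real N powr (- (\<alpha> + \<delta>) + real j * \<delta>)"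

text \<open>The typical configuration: no atom above \<open>N\<^sup>\<delta>\<close>, at most \<open>N\<^sup>\<delta> / level N j\<close> atoms above
  each level (their Poisson means are \<open>1 / level N j\<close>), and at least \<open>N\<^sup>\<gamma> / e\<^sup>2\<close> atoms
  above \<open>N\<^bsup>-\<gamma>\<^esup>\<close> (whose Poisson mean is \<open>N\<^sup>\<gamma>\<close>).\<close>
definition good_event :: "nat \<Rightarrow> 'a set" where
  "good_event N = {\<omega> \<in> space M. atom_count (w \<omega>) {real N powr \<delta>..} = 0
     \<and> (\<forall>j<depth. real (atom_count (w \<omega>) {level N j..}) < real N powr \<delta> / level N j)
     \<and> real N powr \<gamma> / exp 2 \<le> real (atom_count (w \<omega>) {real N powr - \<gamma>..})}"

definition avoid_prob :: "nat \<Rightarrow> 'a \<Rightarrow> real" where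
  "avoid_prob N \<omega> = measure_pmf.prob (K_pmf \<gamma> \<beta> (w \<omega>) N)
     {K. card {k\<in>K. w \<omega> k \<ge> real N powr (- (\<alpha> + \<delta>))} = 0}"

definition hit_bound :: "nat \<Rightarrow> real" where
  "hit_bound N = 2 * real depth * exp 4 * real N powr (- (9 * \<delta>))"

definition miss_bound :: "nat \<Rightarrow> real" where
  "miss_bound N = (real depth + 1) * exp 1 / real N powr \<delta>
     + (real N powr \<gamma> + 1) * exp (3 - real N powr \<gamma> / 4)"

lemma gamma_one_minus_beta: "\<gamma> * (1 - \<beta>) = 1 + 12 * \<delta>"
  by (simp add: \<delta>_def field_simps)

lemma delta_pos: "0 < \<delta>"
proof -
  have "1 / \<gamma> < 1 - \<beta>" using beta_small by simp
  then have "1 < \<gamma> * (1 - \<beta>)" using gamma_gt_1 by (simp add: field_simps)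
  then show ?thesis by (simp add: \<delta>_def)
qed

lemma one_minus_beta_alpha: "(1 - \<beta>) * \<alpha> = 12 * \<delta>"
  using beta_less_1 by (simp add: \<alpha>_def \<delta>_def field_simps)

lemma layer_weight_le:
  assumes N: "1 \<le> N"
  shows "real N powr \<delta> / level N j * level N (Suc j) powr \<beta> \<le> real N powr (14 * \<delta>)"
proof -
  have "level N (Suc j) powr \<beta> = real N powr ((- (\<alpha> + \<delta>) + real (Suc j) * \<delta>) * \<beta>)"
    unfolding level_def by (rule powr_powr)
  moreover have "real N powr \<delta> / level N j = real N powr (\<delta> - (- (\<alpha> + \<delta>) + real j * \<delta>))"
    unfolding level_def by (rule powr_diff[symmetric])
  ultimately have "real N powr \<delta> / level N j * level N (Suc j) powr \<beta>
      = real N powr (\<delta> - (- (\<alpha> + \<delta>) + real j * \<delta>) + (- (\<alpha> + \<delta>) + real (Suc j) * \<delta>) * \<beta>)"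
    by (simp add: powr_add)
  also have "\<delta> - (- (\<alpha> + \<delta>) + real j * \<delta>) + (- (\<alpha> + \<delta>) + real (Suc j) * \<delta>) * \<beta>
      = 14 * \<delta> - (1 - \<beta>) * (real j * \<delta>)"
    using one_minus_beta_alpha by (simp add: algebra_simps)
  also have "real N powr \<dots> \<le> real N powr (14 * \<delta>)"
    using N delta_pos beta_less_1 by (intro powr_mono) auto
  finally show ?thesis .
qed

lemma hit_fraction_le:
  assumes N: "1 \<le> N" and large: "2 * exp 2 \<le> real N powr (11 * \<delta>)"
    and S: "0 \<le> S" "S \<le> real depth * real N powr (14 * \<delta>)"
  defines "W \<equiv> real N powr (1 + 12 * \<delta>) / exp 2"
  shows "0 < W - real N * real N powr \<delta>"
    and "real N * real N * (real N powr \<delta> / W) * S / (W - real N * real N powr \<delta>) \<le> hit_bound N"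
proof -
  have N0: "0 < real N" using N by simp
  have W: "0 < W" using N0 by (simp add: W_def)
  have "2 * exp 2 * real N powr (1 + \<delta>) \<le> real N powr (11 * \<delta>) * real N powr (1 + \<delta>)"
    using large by (intro mult_right_mono) auto
  also have "\<dots> = real N powr (1 + 12 * \<delta>)" by (simp add: powr_add[symmetric] algebra_simps)
  finally have half: "real N * real N powr \<delta> \<le> W / 2"
    using N0 by (simp add: W_def powr_add field_simps)
  then show "0 < W - real N * real N powr \<delta>" using W by simp
  have "real N * real N * (real N powr \<delta> / W) * S / (W - real N * real N powr \<delta>)
      \<le> real N * real N * (real N powr \<delta> / W) * S / (W / 2)"
    using half W S by (intro divide_left_mono) auto
  also have "\<dots> = 2 * (real N * real N * real N powr \<delta> * S) / (W * W)"
    using W by (simp add: field_simps)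
  also have "\<dots> \<le> 2 * (real N * real N * real N powr \<delta> * (real depth * real N powr (14 * \<delta>))) / (W * W)"
    using S by (intro divide_right_mono mult_left_mono) auto
  also have "real N * real N * real N powr \<delta> * (real depth * real N powr (14 * \<delta>))
      = real depth * real N powr (2 + 15 * \<delta>)"
  proof -
    have "2 + 15 * \<delta> = 2 + (\<delta> + 14 * \<delta>)" by simp
    then have "real N powr (2 + 15 * \<delta>) = real N powr 2 * (real N powr \<delta> * real N powr (14 * \<delta>))"
      by (simp only: powr_add)
    then show ?thesis using N0 by (simp add: powr_numeral power2_eq_square)
  qed
  also have "W * W = real N powr (2 + 24 * \<delta>) / exp 4"
    by (simp add: W_def powr_add[symmetric] exp_add[symmetric] field_simps)
  also have "2 * (real depth * real N powr (2 + 15 * \<delta>)) / (real N powr (2 + 24 * \<delta>) / exp 4)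
      = 2 * real depth * exp 4 * real N powr (- (9 * \<delta>))"
  proof -
    have "- (9 * \<delta>) = (2 + 15 * \<delta>) - (2 + 24 * \<delta>)" by simp
    then have "real N powr (- (9 * \<delta>)) = real N powr (2 + 15 * \<delta>) / real N powr (2 + 24 * \<delta>)"
      by (simp only: powr_diff)
    then show ?thesis by simp
  qed
  finally show "real N * real N * (real N powr \<delta> / W) * S / (W - real N * real N powr \<delta>) \<le> hit_bound N"
    by (simp add: hit_bound_def)
qed

lemma level_pos: "1 \<le> N \<Longrightarrow> 0 < level N j"
  by (simp add: level_def)

lemma good_event_atoms_below:
  assumes "\<omega> \<in> good_event N" "regular_atoms (w \<omega>)" "1 \<le> N"
  shows "w \<omega> i < real N powr \<delta>"
proof -
  have "finite {i. real N powr \<delta> \<le> w \<omega> i}"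
    using assms by (simp add: regular_atoms_def)
  moreover have "card {i. real N powr \<delta> \<le> w \<omega> i} = 0"
    using assms(1) by (simp add: good_event_def atom_count_atLeast)
  ultimately show ?thesis by (auto simp: not_le)
qed

lemma good_event_total_weight:
  assumes N: "1 \<le> N" and \<omega>: "\<omega> \<in> good_event N" and reg: "regular_atoms (w \<omega>)"
  shows "real N powr (1 + 12 * \<delta>) / exp 2 \<le> (\<Sum>i<num_slots \<gamma> N. w \<omega> i powr \<beta>)"
proof -
  define m where "m = nat \<lceil>real N powr \<gamma> / exp 2\<rceil>"
  have card: "m \<le> card {i. real N powr - \<gamma> \<le> w \<omega> i}"
    using \<omega> by (simp add: m_def good_event_def atom_count_atLeast nat_le_iff ceiling_le_iff)
  have "real N powr \<gamma> / exp 2 \<le> real N powr \<gamma> / 1"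
    by (intro divide_left_mono) auto
  then have slots: "m \<le> num_slots \<gamma> N"
    unfolding m_def num_slots_def by (intro nat_mono ceiling_mono) simp
  have "real N powr \<gamma> * (real N powr - \<gamma>) powr \<beta> = real N powr (\<gamma> + - \<gamma> * \<beta>)"
    by (simp add: powr_powr flip: powr_add)
  also have "\<gamma> + - \<gamma> * \<beta> = 1 + 12 * \<delta>"
    using gamma_one_minus_beta by (simp add: algebra_simps)
  finally have "real N powr (1 + 12 * \<delta>) / exp 2 = real N powr \<gamma> / exp 2 * (real N powr - \<gamma>) powr \<beta>"
    by simp
  also have "\<dots> \<le> real m * (real N powr - \<gamma>) powr \<beta>"
    unfolding m_def by (intro mult_right_mono real_nat_ceiling_ge) auto
  also have "\<dots> \<le> (\<Sum>i<num_slots \<gamma> N. w \<omega> i powr \<beta>)"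
    using reg N beta_pos card slots
    by (intro sum_powr_ge_card_level_set) (auto simp: regular_atoms_def less_imp_le)
  finally show ?thesis .
qed

lemma avoid_prob_ge:
  assumes N: "1 \<le> N" and large: "2 * exp 2 \<le> real N powr (11 * \<delta>)"
    and \<omega>: "\<omega> \<in> good_event N" and reg: "regular_atoms (w \<omega>)"
  shows "1 - hit_bound N \<le> avoid_prob N \<omega>"
proof -
  define U where "U = real N powr \<delta>"
  define W where "W = real N powr (1 + 12 * \<delta>) / exp 2"
  define S where "S = (\<Sum>j<depth. U / level N j * level N (Suc j) powr \<beta>)"
  have U: "1 \<le> U" using N delta_pos by (simp add: U_def ge_one_powr_ge_zero)
  have S: "0 \<le> S" "S \<le> real depth * real N powr (14 * \<delta>)"
    using layer_weight_le[OF N] sum_bounded_above[of "{..<depth}" "\<lambda>j. U / level N j * level N (Suc j) powr \<beta>"]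
    by (auto simp: S_def U_def level_def intro!: sum_nonneg)
  have "\<alpha> + 2 * \<delta> \<le> real depth * \<delta>"
    using real_nat_ceiling_ge[of "(\<alpha> + 2 * \<delta>) / \<delta>"] delta_pos by (simp add: depth_def pos_divide_le_eq)
  then have top: "U \<le> level N depth"
    unfolding U_def level_def using N by (intro powr_mono) auto
  have layers: "finite {i. level N j \<le> w \<omega> i} \<and> real (card {i. level N j \<le> w \<omega> i}) \<le> U / level N j"
    if "j < depth" for j
    using that \<omega> reg level_pos[OF N] by (auto simp: good_event_def atom_count_atLeast regular_atoms_def U_def)
  have "1 - real N * real N * (U / W) * S / (W - real N * U)
      \<le> measure_pmf.prob (K_pmf \<gamma> \<beta> (w \<omega>) N) {K. \<forall>k\<in>K. w \<omega> k < level N 0}"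
    unfolding S_def
    using reg good_event_atoms_below[OF \<omega> reg N] U beta_pos beta_less_1 layers top
      good_event_total_weight[OF N \<omega> reg] hit_fraction_le(1)[OF N large S]
    by (intro prob_K_pmf_avoids_ge) (auto simp: regular_atoms_def less_imp_le U_def W_def)
  moreover have "real N * real N * (U / W) * S / (W - real N * U) \<le> hit_bound N"
    using hit_fraction_le(2)[OF N large S] by (simp add: U_def W_def)
  moreover have "avoid_prob N \<omega> = measure_pmf.prob (K_pmf \<gamma> \<beta> (w \<omega>) N) {K. \<forall>k\<in>K. w \<omega> k < level N 0}"
    by (simp add: avoid_prob_def prob_K_pmf_card_eq_0 level_def)
  ultimately show ?thesis by linarith
qed

lemma good_event_prob:
  assumes N: "1 \<le> N" and U: "exp 1 \<le> real N powr \<delta>" and N_gamma: "2 \<le> real N powr \<gamma>"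
  shows "good_event N \<in> events" and "1 - miss_bound N \<le> prob (good_event N)"
proof -
  define X where "X t \<omega> = atom_count (w \<omega>) {t..}" for t \<omega>
  define U where "U = real N powr \<delta>"
  define b where "b = real N powr - \<gamma>"
  have law: "poisson_law M (X t) (1 / t)" if "0 < t" for t
    using poisson_atoms_atLeast(2)[OF poisson that] by (simp add: X_def[abs_def])
  have pos: "0 < U" "0 < b" "\<And>j. 0 < level N j" using N level_pos by (simp_all add: U_def b_def)
  have b_inv: "1 / b = real N powr \<gamma>" by (simp add: b_def powr_minus_divide)
  define F_top where "F_top = {\<omega>\<in>space M. U * (1 / U) \<le> real (X U \<omega>)}"
  define F where "F j = {\<omega>\<in>space M. U * (1 / level N j) \<le> real (X (level N j) \<omega>)}" for j
  define F_bot where "F_bot = {\<omega>\<in>space M. real (X b \<omega>) < (1 / b) / exp 2}"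
  have events: "F_top \<in> events" "F j \<in> events" "F_bot \<in> events" for j
    unfolding F_top_def F_def F_bot_def using pos by (auto intro!: sets_poisson_law[OF law])
  have good: "good_event N = space M - (F_top \<union> (\<Union>j<depth. F j) \<union> F_bot)"
    using pos b_inv
    by (auto simp: good_event_def F_top_def F_def F_bot_def X_def U_def b_def not_le not_less)
  then show "good_event N \<in> events" using events by auto
  have F_union: "(\<Union>j<depth. F j) \<in> events" using events by auto
  have "prob (F_top \<union> (\<Union>j<depth. F j) \<union> F_bot)
      \<le> prob F_top + prob (\<Union>j<depth. F j) + prob F_bot"
    using measure_Un_le[of "F_top \<union> (\<Union>j<depth. F j)" M F_bot] measure_Un_le[of F_top M]
      events F_union by fastforce
  also have "\<dots> \<le> prob F_top + (\<Sum>j<depth. prob (F j)) + prob F_bot"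
    using events by (simp add: finite_measure_subadditive_finite image_subset_iff)
  also have "\<dots> \<le> exp 1 / U + (\<Sum>j<depth. exp 1 / U) + (1 / b + 1) * exp (3 - (1 / b) / 4)"
    using pos U N_gamma b_inv unfolding F_top_def F_def F_bot_def U_def
    by (intro add_mono sum_mono prob_poisson_law_ge_mult_le prob_poisson_law_less_div_le law) auto
  also have "\<dots> = miss_bound N"
    by (simp add: miss_bound_def b_inv U_def algebra_simps add_divide_distrib)
  finally show "1 - miss_bound N \<le> prob (good_event N)"
    using good prob_compl[of "F_top \<union> (\<Union>j<depth. F j) \<union> F_bot"] events F_union by simp
qed

lemma integrable_avoid_prob: "integrable M (avoid_prob N)"
proof (rule integrable_const_bound[where B=1])
  show "avoid_prob N \<in> borel_measurable M"
    unfolding avoid_prob_def[abs_def]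
    by (intro borel_measurable_prob_K_pmf_card_eq_0 poisson_atoms_borel_measurable[OF poisson])
qed (simp add: avoid_prob_def)

lemma integral_avoid_prob_ge:
  assumes N: "1 \<le> N" "exp 1 \<le> real N powr \<delta>" "2 \<le> real N powr \<gamma>"
    "2 * exp 2 \<le> real N powr (11 * \<delta>)" and hit: "hit_bound N \<le> 1"
  shows "(1 - hit_bound N) * (1 - miss_bound N) \<le> (\<integral>\<omega>. avoid_prob N \<omega> \<partial>M)"
proof -
  have G: "good_event N \<in> events" by (rule good_event_prob(1)[OF N(1-3)])
  have "(1 - hit_bound N) * (1 - miss_bound N) \<le> (1 - hit_bound N) * prob (good_event N)"
    using good_event_prob(2)[OF N(1-3)] hit by (intro mult_left_mono) auto
  also have "\<dots> = (\<integral>\<omega>. indicator (good_event N) \<omega> * (1 - hit_bound N) \<partial>M)"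
    using G by simp
  also have "\<dots> \<le> (\<integral>\<omega>. avoid_prob N \<omega> \<partial>M)"
  proof (rule integral_mono_AE)
    have "integrable M (indicator (good_event N) :: 'a \<Rightarrow> real)"
      using G by (intro integrable_real_indicator) (simp_all add: emeasure_eq_measure)
    then show "integrable M (\<lambda>\<omega>. indicator (good_event N) \<omega> * (1 - hit_bound N))"
      by simp
    show "AE \<omega> in M. indicator (good_event N) \<omega> * (1 - hit_bound N) \<le> avoid_prob N \<omega>"
      using AE_poisson_atoms_regular[OF poisson]
    proof eventually_elim
      case (elim \<omega>)
      show ?case
      proof (cases "\<omega> \<in> good_event N")
        case True
        then show ?thesis using avoid_prob_ge[OF N(1,4) True elim] by simp
      qed (simp add: avoid_prob_def)
    qed
  qed (rule integrable_avoid_prob)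
  finally show ?thesis .
qed

lemma eventually_integral_avoid_prob_ge:
  "eventually (\<lambda>N. (1 - hit_bound N) * (1 - miss_bound N) \<le> (\<integral>\<omega>. avoid_prob N \<omega> \<partial>M)) sequentially"
proof -
  have \<delta>: "0 < \<delta>" and \<gamma>: "0 < \<gamma>" using delta_pos gamma_gt_1 by auto
  have "eventually (\<lambda>N::nat. 1 \<le> N) sequentially"
    and "eventually (\<lambda>N. exp 1 \<le> real N powr \<delta>) sequentially"
    and "eventually (\<lambda>N. 2 \<le> real N powr \<gamma>) sequentially"
    and "eventually (\<lambda>N. 2 * exp 2 \<le> real N powr (11 * \<delta>)) sequentially"
    and "eventually (\<lambda>N. hit_bound N \<le> 1) sequentially"
    unfolding hit_bound_def using \<delta> \<gamma> by real_asymp+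
  then show ?thesis
    by eventually_elim (rule integral_avoid_prob_ge)
qed

lemma tendsto_integral_avoid_prob: "(\<lambda>N. \<integral>\<omega>. avoid_prob N \<omega> \<partial>M) \<longlonglongrightarrow> 1"
proof (rule tendsto_sandwich[OF eventually_integral_avoid_prob_ge])
  show "eventually (\<lambda>N. (\<integral>\<omega>. avoid_prob N \<omega> \<partial>M) \<le> 1) sequentially"
    by (intro always_eventually allI integral_le_const integrable_avoid_prob)
       (simp add: avoid_prob_def)
  have "0 < \<delta>" "0 < \<gamma>" using delta_pos gamma_gt_1 by auto
  then show "(\<lambda>N. (1 - hit_bound N) * (1 - miss_bound N)) \<longlonglongrightarrow> 1"
    unfolding hit_bound_def miss_bound_def by real_asymp
qed simp

end

theorem lemma5p5:
  fixes \<gamma> \<beta> :: real and M :: "'a measure" and w :: "'a \<Rightarrow> nat \<Rightarrow> real"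
  assumes "1 < \<gamma>" and "0 < \<beta>" and "\<beta> < 1" and "\<beta> < 1 - 1 / \<gamma>"
    and "poisson_atoms M w"
  shows "let \<alpha> = \<gamma> - 1 / (1 - \<beta>) in
    \<exists>\<delta>>0. (\<lambda>N::nat. \<integral>\<omega>. measure_pmf.prob (K_pmf \<gamma> \<beta> (w \<omega>) N)
              {K. card {k\<in>K. w \<omega> k \<ge> real N powr (- (\<alpha> + \<delta>))} = 0} \<partial>M)
          \<longlonglongrightarrow> 1"
proof -
  interpret poisson_sampling \<gamma> \<beta> M w
    using assms by unfold_locales
  show ?thesis
    using delta_pos tendsto_integral_avoid_prob
    unfolding Let_def avoid_prob_def[abs_def] \<alpha>_def by blast
qed

end
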